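(* Let $\mathcal G$ be a doubly connected molecular graph. Construct $\mathcal G_{new}$ from $\mathcal G$ as follows: add a new molecule $\mathcal M_{new}$; replace a diffusive edge $b_0$ of $\mathcal G$ joining molecules $\mathcal M_1$ and $\mathcal M_2$ by two diffusive edges, $b_1$ joining $\mathcal M_1$ and $\mathcal M_{new}$ and $b_2$ joining $\mathcal M_2$ and $\mathcal M_{new}$; and add a diffusive edge $b_3$ joining $\mathcal M_{new}$ and a molecule $\mathcal M_3$ of $\mathcal G$. If a blue solid edge is redundant in $\mathcal G$, then it is also redundant in $\mathcal G_{new}$.
   Context: A molecular graph is a finite multigraph whose vertices are called molecules and each of whose edges joins two distinct molecules and is either a diffusive edge or a blue solid edge (parallel edges are allowed). A molecular graph is doubly connected if there exist two disjoint sets of edges, $\mathcal B_{black}$ consisting only of diffusive edges and $\mathcal B_{blue}$ consisting only of blue solid or diffusive edges, such that each of $\mathcal B_{black}$ and $\mathcal B_{blue}$ contains a spanning tree of the set of all molecules. A blue solid edge $e$ of a doubly connected graph is redundant if the graph obtained by deleting $e$ is still doubly connected. *)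

theory Defs
  imports Main
begin

datatype edge_kind = Diffusive | BlueSolid

text \<open>A molecular graph: finite set V of molecules, finite set E of edges (of an abstract
  edge type, so parallel edges are allowed), each edge e joining the two distinct molecules
  fst (ends e) and snd (ends e), and having a kind.\<close>

definition molecular_graph :: "'v set \<Rightarrow> 'e set \<Rightarrow> ('e \<Rightarrow> 'v \<times> 'v) \<Rightarrow> bool" where
  "molecular_graph V E ends \<longleftrightarrow> finite V \<and> finite E \<and>
     (\<forall>e\<in>E. fst (ends e) \<in> V \<and> snd (ends e) \<in> V \<and> fst (ends e) \<noteq> snd (ends e))"

definition adj_rel :: "('e \<Rightarrow> 'v \<times> 'v) \<Rightarrow> 'e set \<Rightarrow> ('v \<times> 'v) set" where
  "adj_rel ends F = {(u, v). \<exists>e\<in>F. ends e = (u, v) \<or> ends e = (v, u)}"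

definition connects :: "'v set \<Rightarrow> ('e \<Rightarrow> 'v \<times> 'v) \<Rightarrow> 'e set \<Rightarrow> bool" where
  "connects V ends F \<longleftrightarrow> (\<forall>u\<in>V. \<forall>v\<in>V. (u, v) \<in> (adj_rel ends F)\<^sup>*)"

definition spanning_tree :: "'v set \<Rightarrow> ('e \<Rightarrow> 'v \<times> 'v) \<Rightarrow> 'e set \<Rightarrow> bool" where
  "spanning_tree V ends T \<longleftrightarrow> connects V ends T \<and> (\<forall>e\<in>T. \<not> connects V ends (T - {e}))"

definition contains_spanning_tree :: "'v set \<Rightarrow> ('e \<Rightarrow> 'v \<times> 'v) \<Rightarrow> 'e set \<Rightarrow> bool" where
  "contains_spanning_tree V ends B \<longleftrightarrow> (\<exists>T\<subseteq>B. spanning_tree V ends T)"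

definition doubly_connected ::
  "'v set \<Rightarrow> 'e set \<Rightarrow> ('e \<Rightarrow> 'v \<times> 'v) \<Rightarrow> ('e \<Rightarrow> edge_kind) \<Rightarrow> bool" where
  "doubly_connected V E ends kind \<longleftrightarrow>
     (\<exists>Bblack Bblue. Bblack \<subseteq> E \<and> Bblue \<subseteq> E \<and> Bblack \<inter> Bblue = {} \<and>
        (\<forall>e\<in>Bblack. kind e = Diffusive) \<and>
        (\<forall>e\<in>Bblue. kind e = BlueSolid \<or> kind e = Diffusive) \<and>
        contains_spanning_tree V ends Bblack \<and> contains_spanning_tree V ends Bblue)"

definition redundant ::
  "'v set \<Rightarrow> 'e set \<Rightarrow> ('e \<Rightarrow> 'v \<times> 'v) \<Rightarrow> ('e \<Rightarrow> edge_kind) \<Rightarrow> 'e \<Rightarrow> bool" where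
  "redundant V E ends kind e \<longleftrightarrow> e \<in> E \<and> kind e = BlueSolid \<and>
     doubly_connected V E ends kind \<and> doubly_connected V (E - {e}) ends kind"

end

theory Submission
  imports Defs
begin

text \<open>For a finite edge set, containing a spanning tree is the same as connecting all molecules
  (a connected subset of minimal cardinality is a spanning tree). Double connectivity therefore
  only asks for two disjoint connected edge classes of the right kinds. Subdividing b0 by the new
  molecule keeps the class containing b0 connected and makes it reach Mnew; the other class
  reaches Mnew through the new diffusive edge b3. Applying this to G and to G without the blue
  edge b shows that b stays redundant.\<close>

lemma adj_rel_mono: "F \<subseteq> G \<Longrightarrow> adj_rel ends F \<subseteq> adj_rel ends G"
  unfolding adj_rel_def by blast

lemma adj_rel_cong: "(\<And>e. e \<in> F \<Longrightarrow> ends' e = ends e) \<Longrightarrow> adj_rel ends' F = adj_rel ends F"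
  unfolding adj_rel_def by auto

lemma adj_rel_edge:
  assumes "e \<in> F" "ends e = (u, v)"
  shows "(u, v) \<in> adj_rel ends F" "(v, u) \<in> adj_rel ends F"
  using assms unfolding adj_rel_def by blast+

lemma connects_rtrancl_mono:
  assumes "connects V ends F" "adj_rel ends F \<subseteq> (adj_rel ends G)\<^sup>*"
  shows "connects V ends G"
  using assms rtrancl_subset_rtrancl unfolding connects_def by blast

lemma connects_mono: "connects V ends F \<Longrightarrow> F \<subseteq> G \<Longrightarrow> connects V ends G"
  by (erule connects_rtrancl_mono) (use adj_rel_mono in blast)

lemma connects_cong:
  "(\<And>e. e \<in> F \<Longrightarrow> ends' e = ends e) \<Longrightarrow> connects V ends' F = connects V ends F"
  unfolding connects_def using adj_rel_cong[of F ends' ends] by simp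

lemma contains_spanning_tree_cong:
  assumes "\<And>e. e \<in> F \<Longrightarrow> ends' e = ends e"
  shows "contains_spanning_tree V ends' F = contains_spanning_tree V ends F"
proof -
  have "spanning_tree V ends' T = spanning_tree V ends T" if "T \<subseteq> F" for T
  proof -
    have "connects V ends' S = connects V ends S" if "S \<subseteq> T" for S
      using \<open>T \<subseteq> F\<close> that assms by (intro connects_cong) blast
    then show ?thesis unfolding spanning_tree_def by blast
  qed
  then show ?thesis unfolding contains_spanning_tree_def by blast
qed

lemma contains_spanning_tree_iff_connects:
  assumes "finite F"
  shows "contains_spanning_tree V ends F \<longleftrightarrow> connects V ends F"
proof
  assume "contains_spanning_tree V ends F"
  then show "connects V ends F"
    unfolding contains_spanning_tree_def spanning_tree_def using connects_mono by blast
next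
  assume "connects V ends F"
  then obtain T where T: "T \<subseteq> F" "connects V ends T"
    and minimal: "\<And>S. S \<subseteq> F \<Longrightarrow> connects V ends S \<Longrightarrow> card T \<le> card S"
    using ex_has_least_nat[of "\<lambda>T. T \<subseteq> F \<and> connects V ends T" F card] by blast
  have "finite T" using T(1) assms finite_subset by blast
  have "\<not> connects V ends (T - {e})" if "e \<in> T" for e
    using minimal[of "T - {e}"] T(1) card_Diff1_less[OF \<open>finite T\<close> that] by auto
  then show "contains_spanning_tree V ends F"
    unfolding contains_spanning_tree_def spanning_tree_def using T by blast
qed

lemma doubly_connected_iff_connects:
  assumes "finite E"
  shows "doubly_connected V E ends kind \<longleftrightarrow>
     (\<exists>Bblack Bblue. Bblack \<subseteq> E \<and> Bblue \<subseteq> E \<and> Bblack \<inter> Bblue = {} \<and>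
        (\<forall>e\<in>Bblack. kind e = Diffusive) \<and>
        (\<forall>e\<in>Bblue. kind e = BlueSolid \<or> kind e = Diffusive) \<and>
        connects V ends Bblack \<and> connects V ends Bblue)"
proof -
  have "contains_spanning_tree V ends B = connects V ends B" if "B \<subseteq> E" for B
    using contains_spanning_tree_iff_connects finite_subset[OF that assms] by blast
  then show ?thesis
    unfolding doubly_connected_def by (intro ex_cong1 conj_cong refl) auto
qed

lemma doubly_connected_cong:
  assumes "doubly_connected V E ends kind"
    and "\<And>e. e \<in> E \<Longrightarrow> ends' e = ends e" "\<And>e. e \<in> E \<Longrightarrow> kind' e = kind e"
  shows "doubly_connected V E ends' kind'"
proof -
  obtain Bblack Bblue where B: "Bblack \<subseteq> E" "Bblue \<subseteq> E" "Bblack \<inter> Bblue = {}"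
    "\<forall>e\<in>Bblack. kind e = Diffusive" "\<forall>e\<in>Bblue. kind e = BlueSolid \<or> kind e = Diffusive"
    "contains_spanning_tree V ends Bblack" "contains_spanning_tree V ends Bblue"
    using assms(1) unfolding doubly_connected_def by blast
  have "contains_spanning_tree V ends' B = contains_spanning_tree V ends B" if "B \<subseteq> E" for B
    using that assms(2) by (intro contains_spanning_tree_cong) blast
  then have "contains_spanning_tree V ends' Bblack" "contains_spanning_tree V ends' Bblue"
    using B(1,2,6,7) by simp_all
  moreover have "kind' e = kind e" if "e \<in> Bblack \<union> Bblue" for e
    using that B(1,2) assms(3) by blast
  ultimately show ?thesis
    unfolding doubly_connected_def using B(1-5) by (intro exI[of _ Bblack] exI[of _ Bblue]) auto
qed

lemma connects_insert_vertex:
  assumes "connects V ends F" "e \<in> F" "ends e = (w, x) \<or> ends e = (x, w)" "x \<in> V"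
  shows "connects (insert w V) ends F"
  unfolding connects_def
proof (intro ballI)
  let ?R = "(adj_rel ends F)\<^sup>*"
  have "(w, x) \<in> adj_rel ends F" "(x, w) \<in> adj_rel ends F"
    using assms(2,3) adj_rel_edge[of e F ends] by blast+
  moreover have "(u, v) \<in> ?R" if "u \<in> V" "v \<in> V" for u v
    using assms(1) that unfolding connects_def by blast
  ultimately have "(u, x) \<in> ?R" "(x, u) \<in> ?R" if "u \<in> insert w V" for u
    using that assms(4) by auto
  then show "(u, v) \<in> ?R" if "u \<in> insert w V" "v \<in> insert w V" for u v
    using that rtrancl_trans by metis
qed

lemma connects_insert_pendant_edge:
  assumes "connects V ends F" "ends e = (w, x)" "x \<in> V"
  shows "connects (insert w V) ends (insert e F)"
  using connects_insert_vertex[OF connects_mono[OF assms(1)]] assms(2,3) by blast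

lemma connects_subdivide_edge:
  assumes "connects V ends F" "ends b0 = (x, y)" "ends b1 = (x, w)" "ends b2 = (y, w)"
    and "x \<in> V"
  shows "connects (insert w V) ends ((F - {b0}) \<union> {b1, b2})"
proof -
  let ?F = "(F - {b0}) \<union> {b1, b2}"
  let ?R = "(adj_rel ends ?F)\<^sup>*"
  have path: "(x, y) \<in> ?R" "(y, x) \<in> ?R"
    using adj_rel_edge[of b1 ?F ends] adj_rel_edge[of b2 ?F ends] assms(3,4)
    by (simp_all add: converse_rtrancl_into_rtrancl)
  have "adj_rel ends F \<subseteq> ?R"
  proof
    fix p assume "p \<in> adj_rel ends F"
    then obtain e u v where p: "p = (u, v)" and e: "e \<in> F" "ends e = (u, v) \<or> ends e = (v, u)"
      unfolding adj_rel_def by blast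
    show "p \<in> ?R"
    proof (cases "e = b0")
      case True
      then show ?thesis using path p e(2) assms(2) by auto
    next
      case False
      then have "p \<in> adj_rel ends ?F" using e p unfolding adj_rel_def by blast
      then show ?thesis by blast
    qed
  qed
  then have "connects V ends ?F" using assms(1) connects_rtrancl_mono by blast
  then show ?thesis using connects_insert_vertex[of V ends ?F b1 w x] assms(3,5) by blast
qed

lemma doubly_connected_subdivide_attach:
  assumes "finite E" "doubly_connected V E ends kind"
    and "ends b0 = (x, y)" "ends b1 = (x, w)" "ends b2 = (y, w)" "ends b3 = (w, z)"
    and "x \<in> V" "z \<in> V"
    and "kind b1 = Diffusive" "kind b2 = Diffusive" "kind b3 = Diffusive"
    and "b1 \<notin> E" "b2 \<notin> E" "b3 \<notin> E" "b3 \<noteq> b1" "b3 \<noteq> b2"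
  shows "doubly_connected (insert w V) ((E - {b0}) \<union> {b1, b2, b3}) ends kind"
proof -
  let ?E = "(E - {b0}) \<union> {b1, b2, b3}"
  define subdivide where "subdivide B = (B - {b0}) \<union> {b1, b2}" for B
  obtain Bblack Bblue where B: "Bblack \<subseteq> E" "Bblue \<subseteq> E" "Bblack \<inter> Bblue = {}"
    "\<forall>e\<in>Bblack. kind e = Diffusive" "\<forall>e\<in>Bblue. kind e = BlueSolid \<or> kind e = Diffusive"
    "connects V ends Bblack" "connects V ends Bblue"
    using assms(2) unfolding doubly_connected_iff_connects[OF assms(1)] by blast
  have "finite ?E" using assms(1) by simp
  have by_classes: "doubly_connected (insert w V) ?E ends kind"
    if "K \<subseteq> ?E" "L \<subseteq> ?E" "K \<inter> L = {}" "\<forall>e\<in>K. kind e = Diffusive"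
      "\<forall>e\<in>L. kind e = BlueSolid \<or> kind e = Diffusive"
      "connects (insert w V) ends K" "connects (insert w V) ends L" for K L
    unfolding doubly_connected_iff_connects[OF \<open>finite ?E\<close>] using that by blast
  have split: "insert b3 X \<subseteq> ?E" "subdivide Y \<subseteq> ?E" "insert b3 X \<inter> subdivide Y = {}"
    if "X \<subseteq> E" "Y \<subseteq> E" "X \<inter> Y = {}" "b0 \<notin> X" for X Y
    using that assms(12-16) unfolding subdivide_def by auto
  have kinds: "\<forall>e\<in>insert b3 X. P (kind e)" "\<forall>e\<in>subdivide X. P (kind e)"
    if "\<forall>e\<in>X. P (kind e)" "P Diffusive" for X P
    using that assms(9-11) unfolding subdivide_def by auto
  have connected: "connects (insert w V) ends (insert b3 B)" "connects (insert w V) ends (subdivide B)"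
    if "connects V ends B" for B
    unfolding subdivide_def
    using connects_insert_pendant_edge[OF that assms(6,8)] connects_subdivide_edge[OF that assms(3-5,7)]
    by blast+
  note black = kinds[of Bblack "\<lambda>k. k = Diffusive"] connected[OF B(6)]
  note blue = kinds[of Bblue "\<lambda>k. k = BlueSolid \<or> k = Diffusive"] connected[OF B(7)]
  show ?thesis
  proof (cases "b0 \<in> Bblack")
    case True
    then have "b0 \<notin> Bblue" using B(3) by blast
    then have "insert b3 Bblue \<subseteq> ?E" "subdivide Bblack \<subseteq> ?E"
      "subdivide Bblack \<inter> insert b3 Bblue = {}"
      using split[of Bblue Bblack] B(1-3) by blast+
    then show ?thesis
      using by_classes[of "subdivide Bblack" "insert b3 Bblue"] black blue B(4,5) by simp
  next
    case False
    then have "insert b3 Bblack \<subseteq> ?E" "subdivide Bblue \<subseteq> ?E"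
      "insert b3 Bblack \<inter> subdivide Bblue = {}"
      using split[of Bblack Bblue] B(1-3) by blast+
    then show ?thesis
      using by_classes[of "insert b3 Bblack" "subdivide Bblue"] black blue B(4,5) by simp
  qed
qed

theorem claimA7:
  fixes V :: "'v set" and E :: "'e set" and ends :: "'e \<Rightarrow> 'v \<times> 'v"
    and kind :: "'e \<Rightarrow> edge_kind"
    and Mnew M1 M2 M3 :: 'v and b0 b1 b2 b3 b :: 'e
  assumes mol: "molecular_graph V E ends"
    and dc: "doubly_connected V E ends kind"
    and new_mol: "Mnew \<notin> V"
    and b0: "b0 \<in> E" "kind b0 = Diffusive" "ends b0 = (M1, M2)"
    and M3: "M3 \<in> V"
    and new_edges: "b1 \<notin> E" "b2 \<notin> E" "b3 \<notin> E" "b1 \<noteq> b2" "b1 \<noteq> b3" "b2 \<noteq> b3"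
    and red: "redundant V E ends kind b"
  shows "redundant (insert Mnew V) ((E - {b0}) \<union> {b1, b2, b3})
           (ends(b1 := (M1, Mnew), b2 := (M2, Mnew), b3 := (Mnew, M3)))
           (kind(b1 := Diffusive, b2 := Diffusive, b3 := Diffusive)) b"
proof -
  let ?ends = "ends(b1 := (M1, Mnew), b2 := (M2, Mnew), b3 := (Mnew, M3))"
  let ?kind = "kind(b1 := Diffusive, b2 := Diffusive, b3 := Diffusive)"
  have b: "b \<in> E" "kind b = BlueSolid" "doubly_connected V (E - {b}) ends kind"
    using red unfolding redundant_def by auto
  have "b \<notin> {b0, b1, b2, b3}"
    using b(1,2) b0(2) new_edges(1-3) by auto
  have "finite E" "fst (ends b0) \<in> V"
    using mol b0(1) unfolding molecular_graph_def by blast+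
  then have "M1 \<in> V" using b0(3) by simp
  have new_dc: "doubly_connected (insert Mnew V) ((F - {b0}) \<union> {b1, b2, b3}) ?ends ?kind"
    if "F \<subseteq> E" "doubly_connected V F ends kind" for F
  proof (rule doubly_connected_subdivide_attach[where x = M1 and y = M2 and z = M3])
    show "finite F" using that(1) \<open>finite E\<close> by (rule finite_subset)
    show "doubly_connected V F ?ends ?kind"
      using that new_edges by (intro doubly_connected_cong[OF that(2)]) auto
  qed (use that(1) b0 M3 \<open>M1 \<in> V\<close> new_edges in auto)
  have "(E - {b} - {b0}) \<union> {b1, b2, b3} = ((E - {b0}) \<union> {b1, b2, b3}) - {b}"
    using \<open>b \<notin> {b0, b1, b2, b3}\<close> by auto
  then have "doubly_connected (insert Mnew V) (((E - {b0}) \<union> {b1, b2, b3}) - {b}) ?ends ?kind"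
    using new_dc[OF Diff_subset b(3)] by simp
  then show ?thesis
    unfolding redundant_def using new_dc[OF order_refl dc] b(1,2) \<open>b \<notin> {b0, b1, b2, b3}\<close>
    by simp
qed

end
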